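(* Let $(M,\Sigma)$ be a measurable space, $r\ge1$, and $\mu_1,\dots,\mu_r$ non-atomic countably additive finite measures on $\Sigma$. Let $(H_k)_{k\ge1}$ be measurable sets and $(h_k)_{k\ge1}$ indices in $\{1,\dots,r\}$ such that for every $k$: $H_k\subseteq M\setminus\bigcup_{i=1}^{k-1}H_i$, $H_k$ has a gentleman's solution (a partition $H_k=F_1\sqcup\dots\sqcup F_r$ with $\mu_i(F_i)\le\mu_i(F_j)$ for all $i,j$), and $\mu_{h_k}(H_k)\ge 2^{-(r-1)}\mu_{h_k}\bigl(M\setminus\bigcup_{i=1}^{k-1}H_i\bigr)$. Let $\ell\in\{1,\dots,r\}$ be an index with $h_k=\ell$ for infinitely many $k$, and let $M_\infty=M\setminus\bigsqcup_{i=1}^\infty H_i$. Then $\mu_\ell(M_\infty)=0$. *)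

theory Defs
  imports "HOL-Analysis.Analysis"
begin

definition nonatomic :: "'a measure \<Rightarrow> bool" where
  "nonatomic m \<longleftrightarrow>
     (\<forall>A\<in>sets m. 0 < emeasure m A \<longrightarrow>
        (\<exists>B\<in>sets m. B \<subseteq> A \<and> 0 < emeasure m B \<and> emeasure m B < emeasure m A))"

definition gentleman_solution ::
  "'a measure \<Rightarrow> nat \<Rightarrow> (nat \<Rightarrow> 'a measure) \<Rightarrow> 'a set \<Rightarrow> bool" where
  "gentleman_solution N r \<mu> H \<longleftrightarrow>
     (\<exists>F :: nat \<Rightarrow> 'a set.
        (\<forall>i\<in>{1..r}. F i \<in> sets N) \<and>
        disjoint_family_on F {1..r} \<and>
        (\<Union>i\<in>{1..r}. F i) = H \<and>
        (\<forall>i\<in>{1..r}. \<forall>j\<in>{1..r}. measure (\<mu> i) (F i) \<le> measure (\<mu> i) (F j)))"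

end

theory Submission
  imports Defs
begin

text \<open>The sets \<open>H k\<close> are pairwise disjoint, so the series of their \<open>\<mu> l\<close>-measures
converges and \<open>\<mu> l (H k) \<longrightarrow> 0\<close>. Since \<open>M\<^sub>\<infinity>\<close> lies in every remainder
\<open>M - (H 1 \<union> \<dots> \<union> H (k - 1))\<close>, each of the infinitely many \<open>k\<close> with \<open>h k = l\<close> gives
\<open>\<mu> l (H k) \<ge> 2 ^ -(r - 1) * \<mu> l (M\<^sub>\<infinity>)\<close>, which forces \<open>\<mu> l (M\<^sub>\<infinity>) = 0\<close>.\<close>

lemma disjoint_family_if_subset_Diff_predecessors:
  fixes H :: "nat \<Rightarrow> 'a set"
  assumes "\<And>k. k \<ge> 1 \<Longrightarrow> H k \<subseteq> S - (\<Union>i\<in>{1..<k}. H i)"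
  shows "disjoint_family (\<lambda>i. H (Suc i))"
  unfolding disjoint_family_on_def
proof (intro ballI impI)
  have "H (Suc j) \<inter> H (Suc i) = {}" if "i < j" for i j
    using assms[of "Suc j"] that by fastforce
  moreover fix i j :: nat
  assume "i \<noteq> j"
  ultimately show "H (Suc i) \<inter> H (Suc j) = {}"
    by (metis Int_commute linorder_neqE_nat)
qed

lemma (in finite_measure) measure_disjoint_family_tendsto_zero:
  assumes "range A \<subseteq> sets M" and "disjoint_family A"
  shows "(\<lambda>k. measure M (A k)) \<longlonglongrightarrow> 0"
proof -
  have "(\<lambda>k. measure M (A k)) sums measure M (\<Union>k. A k)"
    using assms by (rule finite_measure_UNION)
  then show ?thesis
    by (intro summable_LIMSEQ_zero sums_summable)
qed

lemma nonpos_if_frequently_scaled_le_tendsto_zero: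
  fixes f :: "nat \<Rightarrow> real"
  assumes "f \<longlonglongrightarrow> 0" and "c > 0" and "\<exists>\<^sub>F k in sequentially. c * y \<le> f k"
  shows "y \<le> 0"
proof (rule ccontr)
  assume "\<not> y \<le> 0"
  with \<open>c > 0\<close> have "c * y > 0" by simp
  with \<open>f \<longlonglongrightarrow> 0\<close> have "\<forall>\<^sub>F k in sequentially. f k < c * y"
    by (rule order_tendstoD)
  with assms(3) show False
    unfolding frequently_def by (simp add: not_le)
qed

theorem corollary4:
  fixes N :: "'a measure" and r :: nat and \<mu> :: "nat \<Rightarrow> 'a measure"
    and H :: "nat \<Rightarrow> 'a set" and h :: "nat \<Rightarrow> nat" and l :: nat
  assumes r: "r \<ge> 1"
    and meas_sets: "\<And>i. i \<in> {1..r} \<Longrightarrow> sets (\<mu> i) = sets N"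
    and finite: "\<And>i. i \<in> {1..r} \<Longrightarrow> finite_measure (\<mu> i)"
    and nonatomic: "\<And>i. i \<in> {1..r} \<Longrightarrow> nonatomic (\<mu> i)"
    and H_sets: "\<And>k. k \<ge> 1 \<Longrightarrow> H k \<in> sets N"
    and h_range: "\<And>k. k \<ge> 1 \<Longrightarrow> h k \<in> {1..r}"
    and H_sub: "\<And>k. k \<ge> 1 \<Longrightarrow> H k \<subseteq> space N - (\<Union>i\<in>{1..<k}. H i)"
    and H_gent: "\<And>k. k \<ge> 1 \<Longrightarrow> gentleman_solution N r \<mu> (H k)"
    and H_big: "\<And>k. k \<ge> 1 \<Longrightarrow>
       measure (\<mu> (h k)) (H k) \<ge>
         (1/2) ^ (r - 1) * measure (\<mu> (h k)) (space N - (\<Union>i\<in>{1..<k}. H i))"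
    and l_range: "l \<in> {1..r}"
    and l_inf: "infinite {k. k \<ge> 1 \<and> h k = l}"
  shows "measure (\<mu> l) (space N - (\<Union>i\<in>{1..}. H i)) = 0"
proof -
  interpret finite_measure "\<mu> l" using finite l_range by blast
  have sets_l: "sets (\<mu> l) = sets N" using meas_sets l_range by blast
  let ?M_inf = "space N - (\<Union>i\<in>{1..}. H i)"
  have "disjoint_family (\<lambda>i. H (Suc i))"
    using H_sub by (rule disjoint_family_if_subset_Diff_predecessors)
  then have "(\<lambda>i. measure (\<mu> l) (H (Suc i))) \<longlonglongrightarrow> 0"
    using H_sets sets_l by (intro measure_disjoint_family_tendsto_zero) auto
  then have H_tendsto: "(\<lambda>k. measure (\<mu> l) (H k)) \<longlonglongrightarrow> 0"
    by (rule LIMSEQ_imp_Suc)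
  have H_bound: "(1/2) ^ (r - 1) * measure (\<mu> l) ?M_inf \<le> measure (\<mu> l) (H k)"
    if "k \<ge> 1" and "h k = l" for k
  proof -
    have "(\<Union>i\<in>{1..}. H i) \<in> sets N" "(\<Union>i\<in>{1..<k}. H i) \<in> sets N"
      using H_sets by auto
    then have "measure (\<mu> l) ?M_inf \<le> measure (\<mu> l) (space N - (\<Union>i\<in>{1..<k}. H i))"
      using sets_l by (intro finite_measure_mono) auto
    with H_big[OF \<open>k \<ge> 1\<close>] \<open>h k = l\<close> show ?thesis
      by (metis mult_left_mono order_trans zero_le_divide_1_iff zero_le_numeral zero_le_power)
  qed
  have "\<exists>\<^sub>F k in sequentially. k \<ge> 1 \<and> h k = l"
    using l_inf by (simp add: frequently_cofinite flip: cofinite_eq_sequentially)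
  then have
    "\<exists>\<^sub>F k in sequentially. (1/2) ^ (r - 1) * measure (\<mu> l) ?M_inf \<le> measure (\<mu> l) (H k)"
    by (rule frequently_elim1) (use H_bound in blast)
  then have "measure (\<mu> l) ?M_inf \<le> 0"
    by (intro nonpos_if_frequently_scaled_le_tendsto_zero[OF H_tendsto]) simp_all
  then show ?thesis by (simp add: measure_le_0_iff)
qed

end
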